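(* Let $(X,\varphi)$ be an irreducible Smale space, $\mathcal R_1$ a Markov partition with $\max_{R\in\mathcal R_1}\operatorname{diam}R\le\varepsilon_X''$, and $\mathcal R_n=\{R\in\bigvee_{i=1-n}^{n-1}\varphi^{-i}(\mathcal R_1):\operatorname{int}R\ne\varnothing\}$. There exist constants $C,c>0$ such that for every $\varepsilon\in(0,1)$ there is $n_0\in\mathbb N$ with $$ce^{2(\operatorname{h}(\varphi)-\varepsilon)n}<\#\mathcal R_n<Ce^{2(\operatorname{h}(\varphi)+\varepsilon)n}\quad\text{for all }n\ge n_0,$$ where $\operatorname{h}(\varphi)$ is the topological entropy of $\varphi$.
   Context: A Smale space $(X,\varphi)$: compact metric space $(X,d)$, homeomorphism $\varphi$, constants $\varepsilon_X>0,\lambda_X>1$ and a continuous bracket $[\cdot,\cdot]$ on $\{(x,y):d(x,y)\le\varepsilon_X\}$ with $[x,x]=x$, $[x,[y,z]]=[x,z]$, $[[x,y],z]=[x,z]$, $\varphi([x,y])=[\varphi(x),\varphi(y)]$ (whenever defined), such that $\varphi$ contracts distances by $\lambda_X^{-1}$ on local stable sets $X^s(x,\varepsilon)=\{y:d(x,y)<\varepsilon,[x,y]=y\}$ and $\varphi^{-1}$ contracts by $\lambda_X^{-1}$ on local unstable sets $X^u(x,\varepsilon)=\{y:d(x,y)<\varepsilon,[y,x]=y\}$. Irreducible: for nonempty open $U,V$ some $n\in\mathbb N$ has $\varphi^n(U)\cap V\ne\varnothing$. Fix $\varepsilon_X'\in(0,\varepsilon_X/2]$ with $d(x,y)\le\varepsilon_X'\Rightarrow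 d(x,[x,y]),d(y,[x,y])<\varepsilon_X/2$, and $\varepsilon_X''\in(0,\varepsilon_X'/12)$ with $d(x,y)\le\varepsilon_X''\Rightarrow d(\varphi^i x,\varphi^i y)\le\varepsilon_X'/2$ ($|i|\le2$) and $d([x,y],x),d([x,y],y)\le\varepsilon_X'/4$. Rectangle: nonempty $R$, $\operatorname{diam}R\le\varepsilon_X'$, $[x,y]\in R$ for $x,y\in R$; $X^{s}(x,R)=X^{s}(x,2\varepsilon_X')\cap R$, $X^{u}(x,R)=X^{u}(x,2\varepsilon_X')\cap R$; proper: closed with $R=\operatorname{cl}\operatorname{int}R$. Markov partition: finite cover by nonempty proper rectangles with pairwise disjoint interiors such that $\varphi(X^u(x,R_i))\supset X^u(\varphi x,R_j)$ and $\varphi(X^s(x,R_i))\subset X^s(\varphi x,R_j)$ whenever $x\in\operatorname{int}R_i\cap\varphi^{-1}(\operatorname{int}R_j)$. $\mathcal U\vee\mathcal W=\{U\cap W\}$. *)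

theory Defs
  imports "HOL-Analysis.Analysis"
begin

text \<open>Smale spaces are modelled on a type: the compact metric space X is the
  whole universe of a metric-space type 'a (so X is nonempty).\<close>

definition zpow :: "('a \<Rightarrow> 'a) \<Rightarrow> int \<Rightarrow> 'a \<Rightarrow> 'a" where
  "zpow f i = (if 0 \<le> i then f ^^ nat i else (inv f) ^^ nat (- i))"

definition Xs :: "('a::metric_space \<Rightarrow> 'a \<Rightarrow> 'a) \<Rightarrow> 'a \<Rightarrow> real \<Rightarrow> 'a set" where
  "Xs br x e = {y. dist x y < e \<and> br x y = y}"

definition Xu :: "('a::metric_space \<Rightarrow> 'a \<Rightarrow> 'a) \<Rightarrow> 'a \<Rightarrow> real \<Rightarrow> 'a set" where
  "Xu br x e = {y. dist x y < e \<and> br y x = y}"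

text \<open>Smale space (X = UNIV, phi, bracket br, constants eX, lamX). The bracket is a total
  function, but all axioms only concern pairs with dist x y \<le> eX (its domain).\<close>
definition smale_space ::
  "('a::metric_space \<Rightarrow> 'a) \<Rightarrow> ('a \<Rightarrow> 'a \<Rightarrow> 'a) \<Rightarrow> real \<Rightarrow> real \<Rightarrow> bool" where
  "smale_space phi br eX lamX \<longleftrightarrow>
     compact (UNIV :: 'a set) \<and>
     bij phi \<and> continuous_on UNIV phi \<and> continuous_on UNIV (inv phi) \<and>
     eX > 0 \<and> lamX > 1 \<and>
     continuous_on {p. dist (fst p) (snd p) \<le> eX} (\<lambda>p. br (fst p) (snd p)) \<and>
     (\<forall>x. br x x = x) \<and>
     (\<forall>x y z. dist y z \<le> eX \<and> dist x (br y z) \<le> eX \<and> dist x z \<le> eX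
        \<longrightarrow> br x (br y z) = br x z) \<and>
     (\<forall>x y z. dist x y \<le> eX \<and> dist (br x y) z \<le> eX \<and> dist x z \<le> eX
        \<longrightarrow> br (br x y) z = br x z) \<and>
     (\<forall>x y. dist x y \<le> eX \<and> dist (phi x) (phi y) \<le> eX
        \<longrightarrow> phi (br x y) = br (phi x) (phi y)) \<and>
     (\<forall>x y z. y \<in> Xs br x eX \<and> z \<in> Xs br x eX
        \<longrightarrow> dist (phi y) (phi z) \<le> dist y z / lamX) \<and>
     (\<forall>x y z. y \<in> Xu br x eX \<and> z \<in> Xu br x eX
        \<longrightarrow> dist (inv phi y) (inv phi z) \<le> dist y z / lamX)"

definition irreducible_sys :: "('a::topological_space \<Rightarrow> 'a) \<Rightarrow> bool" where
  "irreducible_sys phi \<longleftrightarrow>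
     (\<forall>U V. open U \<and> open V \<and> U \<noteq> {} \<and> V \<noteq> {} \<longrightarrow> (\<exists>n::nat. (phi ^^ n) ` U \<inter> V \<noteq> {}))"

text \<open>The constants eX' and eX'' fixed in the context.\<close>
definition eps1_ok :: "('a::metric_space \<Rightarrow> 'a \<Rightarrow> 'a) \<Rightarrow> real \<Rightarrow> real \<Rightarrow> bool" where
  "eps1_ok br eX e1 \<longleftrightarrow> 0 < e1 \<and> e1 \<le> eX / 2 \<and>
     (\<forall>x y. dist x y \<le> e1 \<longrightarrow> dist x (br x y) < eX / 2 \<and> dist y (br x y) < eX / 2)"

definition eps2_ok :: "('a::metric_space \<Rightarrow> 'a) \<Rightarrow> ('a \<Rightarrow> 'a \<Rightarrow> 'a) \<Rightarrow> real \<Rightarrow> real \<Rightarrow> bool" where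
  "eps2_ok phi br e1 e2 \<longleftrightarrow> 0 < e2 \<and> e2 < e1 / 12 \<and>
     (\<forall>x y. dist x y \<le> e2 \<longrightarrow>
        (\<forall>i::int. \<bar>i\<bar> \<le> 2 \<longrightarrow> dist (zpow phi i x) (zpow phi i y) \<le> e1 / 2) \<and>
        dist (br x y) x \<le> e1 / 4 \<and> dist (br x y) y \<le> e1 / 4)"

definition rectangle :: "('a::metric_space \<Rightarrow> 'a \<Rightarrow> 'a) \<Rightarrow> real \<Rightarrow> 'a set \<Rightarrow> bool" where
  "rectangle br e1 R \<longleftrightarrow> R \<noteq> {} \<and> diameter R \<le> e1 \<and> (\<forall>x\<in>R. \<forall>y\<in>R. br x y \<in> R)"

definition XsR :: "('a::metric_space \<Rightarrow> 'a \<Rightarrow> 'a) \<Rightarrow> real \<Rightarrow> 'a \<Rightarrow> 'a set \<Rightarrow> 'a set" where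
  "XsR br e1 x R = Xs br x (2 * e1) \<inter> R"

definition XuR :: "('a::metric_space \<Rightarrow> 'a \<Rightarrow> 'a) \<Rightarrow> real \<Rightarrow> 'a \<Rightarrow> 'a set \<Rightarrow> 'a set" where
  "XuR br e1 x R = Xu br x (2 * e1) \<inter> R"

definition proper_rectangle :: "('a::metric_space \<Rightarrow> 'a \<Rightarrow> 'a) \<Rightarrow> real \<Rightarrow> 'a set \<Rightarrow> bool" where
  "proper_rectangle br e1 R \<longleftrightarrow> rectangle br e1 R \<and> closed R \<and> R = closure (interior R)"

definition markov_partition ::
  "('a::metric_space \<Rightarrow> 'a) \<Rightarrow> ('a \<Rightarrow> 'a \<Rightarrow> 'a) \<Rightarrow> real \<Rightarrow> 'a set set \<Rightarrow> bool" where
  "markov_partition phi br e1 P \<longleftrightarrow>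
     finite P \<and> (\<forall>R\<in>P. proper_rectangle br e1 R) \<and> \<Union>P = UNIV \<and>
     (\<forall>R\<in>P. \<forall>R'\<in>P. R \<noteq> R' \<longrightarrow> interior R \<inter> interior R' = {}) \<and>
     (\<forall>Ri\<in>P. \<forall>Rj\<in>P. \<forall>x. x \<in> interior Ri \<and> phi x \<in> interior Rj \<longrightarrow>
        XuR br e1 (phi x) Rj \<subseteq> phi ` XuR br e1 x Ri \<and>
        phi ` XsR br e1 x Ri \<subseteq> XsR br e1 (phi x) Rj)"

definition refined_partition :: "('a::topological_space \<Rightarrow> 'a) \<Rightarrow> 'a set set \<Rightarrow> nat \<Rightarrow> 'a set set" where
  "refined_partition phi P n =
     {R. (\<exists>f. (\<forall>i\<in>{1 - int n .. int n - 1}. f i \<in> P) \<and>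
              R = (\<Inter>i\<in>{1 - int n .. int n - 1}. zpow phi (- i) ` f i))
         \<and> interior R \<noteq> {}}"

definition separated_set :: "('a::metric_space \<Rightarrow> 'a) \<Rightarrow> nat \<Rightarrow> real \<Rightarrow> 'a set \<Rightarrow> bool" where
  "separated_set phi n e S \<longleftrightarrow>
     (\<forall>x\<in>S. \<forall>y\<in>S. x \<noteq> y \<longrightarrow> (\<exists>i<n. dist ((phi ^^ i) x) ((phi ^^ i) y) > e))"

definition max_separated :: "('a::metric_space \<Rightarrow> 'a) \<Rightarrow> nat \<Rightarrow> real \<Rightarrow> nat" where
  "max_separated phi n e = Sup {card S | S. finite S \<and> separated_set phi n e S}"

definition topological_entropy :: "('a::metric_space \<Rightarrow> 'a) \<Rightarrow> ereal" where
  "topological_entropy phi =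
     (SUP e\<in>{0<..}. limsup (\<lambda>n. ereal (ln (real (max_separated phi n e)) / real n)))"

end

(*
  Let C_m be the set of cylinders of length m (sets of points with a prescribed itinerary
  through R_1 during m steps) with nonempty interior. R_n is the image of C_(2n-1) under
  phi^(n-1), so it suffices to show that ln #C_m / m tends to the entropy h.

  Lower bound for #C_m: #C_(a+b) <= #C_a * #C_b, and by uniform expansivity an
  (n,e)-separated set injects into C_(n+2k) for some k = k(e). Bowen's definition then
  gives h <= ln #C_p / p for every p.

  Upper bound for #C_m: by the local product structure and the Markov property, a cylinder
  is determined by its first and last rectangle together with any point of a maximal
  (m, e2/3)-separated set shadowing one of its interior points; hence
  #C_m <= (#R_1)^2 * sep(m, e2/3), whose exponential growth rate is at most h.
*)
theory Submission
  imports Defs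
begin

section \<open>Topological preliminaries and topological entropy\<close>

lemma interior_Union_closed_empty:
  assumes "finite F" "\<And>A. A \<in> F \<Longrightarrow> closed A \<and> interior A = {}"
  shows "interior (\<Union>F) = {}"
  using assms
proof (induction F rule: finite_induct)
  case (insert A F)
  then show ?case
    using interior_closed_Un_empty_interior[of A "\<Union>F"] by simp
qed simp

lemma homeomorphism_UNIV_interior_image:
  fixes f g :: "'a::topological_space \<Rightarrow> 'a"
  assumes "homeomorphism UNIV UNIV f g"
  shows "interior (f ` S) = f ` interior S"
proof -
  have sub: "h ` interior T \<subseteq> interior (h ` T)"
    if "homeomorphism UNIV UNIV h k" for h k :: "'a \<Rightarrow> 'a" and T
    using homeomorphism_imp_open_map[OF that, of "interior T"]
    by (intro interior_maximal image_mono interior_subset) auto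
  have fg: "f (g y) = y" "g (f y) = y" for y
    using assms by (auto simp: homeomorphism_def)
  have "interior (f ` S) = f ` g ` interior (f ` S)"
    by (simp add: image_image fg)
  also have "\<dots> \<subseteq> f ` interior S"
    using sub[OF homeomorphism_sym[THEN iffD1, OF assms], of "f ` S"]
    by (intro image_mono) (simp add: image_image fg)
  finally show ?thesis
    using sub[OF assms, of S] by blast
qed

lemma homeomorphism_UNIV_vimage_eq_image:
  assumes "homeomorphism UNIV UNIV f g"
  shows "f -` T = g ` T"
proof -
  have fg: "f (g y) = y" "g (f x) = x" for x y
    using assms by (auto simp: homeomorphism_def)
  show ?thesis
  proof (intro equalityI subsetI)
    fix x
    assume "x \<in> f -` T"
    then show "x \<in> g ` T"
      using fg(2)[of x] by (metis image_eqI vimageD)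
  qed (auto simp: fg)
qed

lemma homeomorphism_UNIV_interior_vimage:
  fixes f g :: "'a::topological_space \<Rightarrow> 'a"
  assumes "homeomorphism UNIV UNIV f g"
  shows "interior (f -` S) = f -` interior S"
  using homeomorphism_UNIV_interior_image[OF homeomorphism_sym[THEN iffD1, OF assms]]
    homeomorphism_UNIV_vimage_eq_image[OF assms] by simp

lemma card_le_of_unique_witness:
  assumes "finite T" and witness: "\<And>s. s \<in> S \<Longrightarrow> \<exists>t\<in>T. R s t"
    and unique: "\<And>s s' t. s \<in> S \<Longrightarrow> s' \<in> S \<Longrightarrow> t \<in> T \<Longrightarrow> R s t \<Longrightarrow> R s' t \<Longrightarrow> s = s'"
  shows "card S \<le> card T"
proof -
  obtain f where f: "\<And>s. s \<in> S \<Longrightarrow> f s \<in> T \<and> R s (f s)"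
    using witness by metis
  then have "inj_on f S"
    using unique by (intro inj_onI) metis
  then show ?thesis
    using f \<open>finite T\<close> by (intro card_inj_on_le) auto
qed

lemma ball_symmetric_interval_iff:
  "(\<forall>i\<in>{- int k..int k}. P i) \<longleftrightarrow> (\<forall>j<2 * k + 1. P (int j - int k))"
proof
  assume "\<forall>i\<in>{- int k..int k}. P i"
  then show "\<forall>j<2 * k + 1. P (int j - int k)"
    by auto
next
  assume P: "\<forall>j<2 * k + 1. P (int j - int k)"
  show "\<forall>i\<in>{- int k..int k}. P i"
  proof
    fix i
    assume "i \<in> {- int k..int k}"
    then have "nat (i + int k) < 2 * k + 1" "int (nat (i + int k)) - int k = i"
      by auto
    then show "P i"
      using P by metis
  qed
qed

lemma submultiplicative_pow_bound:
  fixes g :: "nat \<Rightarrow> nat"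
  assumes "\<And>a b. g (a + b) \<le> g a * g b"
  shows "g (q * p + r) \<le> g p ^ q * g r"
proof (induction q)
  case (Suc q)
  have "g (Suc q * p + r) \<le> g p * g (q * p + r)"
    using assms[of p "q * p + r"] by (simp add: add.assoc)
  also have "\<dots> \<le> g p * (g p ^ q * g r)"
    using Suc by simp
  finally show ?case
    by (simp add: mult.assoc)
qed simp

lemma submultiplicative_div_bound:
  fixes g :: "nat \<Rightarrow> nat"
  assumes "\<And>a b. g (a + b) \<le> g a * g b" "0 < p"
  shows "g n \<le> g p ^ (n div p) * Max (g ` {..<p})"
proof -
  have "g n \<le> g p ^ (n div p) * g (n mod p)"
    using submultiplicative_pow_bound[OF assms(1), of "n div p" p "n mod p"] by simp
  also have "\<dots> \<le> g p ^ (n div p) * Max (g ` {..<p})"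
    using assms(2) by (intro mult_le_mono2 Max_ge) auto
  finally show ?thesis .
qed

lemma limsup_div_le_of_affine_bound:
  fixes a :: "nat \<Rightarrow> real"
  assumes "\<And>n. a n \<le> c * real n + A"
  shows "limsup (\<lambda>n. ereal (a n / real n)) \<le> ereal c"
proof (rule ereal_le_epsilon2)
  fix \<eta> :: real
  assume "0 < \<eta>"
  have "\<forall>\<^sub>F n in sequentially. ereal (a n / real n) \<le> ereal (c + \<eta>)"
  proof (rule eventually_sequentiallyI)
    fix n
    assume "nat \<lceil>A / \<eta>\<rceil> + 1 \<le> n"
    then have "real (nat \<lceil>A / \<eta>\<rceil>) + 1 \<le> real n"
      by (metis of_nat_1 of_nat_add of_nat_le_iff)
    then have "A / \<eta> < real n" "0 < real n"
      using real_nat_ceiling_ge[of "A / \<eta>"] by linarith+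
    then have "a n \<le> (c + \<eta>) * real n"
      using assms[of n] \<open>0 < \<eta>\<close> by (simp add: pos_divide_less_eq algebra_simps)
    then show "ereal (a n / real n) \<le> ereal (c + \<eta>)"
      using \<open>0 < real n\<close> by (simp add: pos_divide_le_eq)
  qed
  then show "limsup (\<lambda>n. ereal (a n / real n)) \<le> ereal c + ereal \<eta>"
    using Limsup_bounded by (metis plus_ereal.simps(1))
qed

lemma max_separated_bounded:
  fixes phi :: "'a::metric_space \<Rightarrow> 'a"
  assumes bound: "\<forall>S. finite S \<and> separated_set phi n e S \<longrightarrow> card S \<le> B"
  shows max_separated_attained:
      "\<exists>S. finite S \<and> separated_set phi n e S \<and> card S = max_separated phi n e"
    and card_le_max_separated:
      "\<And>S. finite S \<Longrightarrow> separated_set phi n e S \<Longrightarrow> card S \<le> max_separated phi n e"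
    and max_separated_pos: "1 \<le> max_separated phi n e"
proof -
  define C where "C = {card S | S. finite S \<and> separated_set phi n e S}"
  have "C \<subseteq> {..B}"
    using bound by (auto simp: C_def)
  then have "finite C"
    using finite_subset by blast
  have "finite {undefined} \<and> separated_set phi n e {undefined}"
    by (simp add: separated_set_def)
  then have "1 \<in> C"
    unfolding C_def by force
  have max: "max_separated phi n e = Max C"
    unfolding max_separated_def C_def[symmetric] using \<open>finite C\<close> \<open>1 \<in> C\<close> by (intro cSup_eq_Max) auto
  have "Max C \<in> C"
    using \<open>finite C\<close> \<open>1 \<in> C\<close> by (intro Max_in) auto
  then show "\<exists>S. finite S \<and> separated_set phi n e S \<and> card S = max_separated phi n e"
    unfolding max by (auto simp: C_def)
  show "card S \<le> max_separated phi n e" if "finite S" "separated_set phi n e S" for S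
    using that Max_ge[OF \<open>finite C\<close>] unfolding max by (auto simp: C_def)
  show "1 \<le> max_separated phi n e"
    using Max_ge[OF \<open>finite C\<close> \<open>1 \<in> C\<close>] unfolding max .
qed

lemma max_separated_spanning:
  fixes phi :: "'a::metric_space \<Rightarrow> 'a"
  assumes bound: "\<forall>S. finite S \<and> separated_set phi n e S \<longrightarrow> card S \<le> B" and "0 \<le> e"
    and S: "finite S" "separated_set phi n e S" "card S = max_separated phi n e"
  shows "\<exists>y\<in>S. \<forall>i<n. dist ((phi ^^ i) x) ((phi ^^ i) y) \<le> e"
proof (rule ccontr)
  assume far: "\<not> ?thesis"
  then have "x \<notin> S"
    using \<open>0 \<le> e\<close> by fastforce
  have "separated_set phi n e (insert x S)"
    using S(2) far unfolding separated_set_def by (auto simp: not_le dist_commute)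
  then have "card (insert x S) \<le> max_separated phi n e"
    using S(1) by (intro card_le_max_separated[OF bound]) auto
  then show False
    using S \<open>x \<notin> S\<close> by simp
qed

lemma ln_max_separated_affine_bound:
  fixes phi :: "'a::metric_space \<Rightarrow> 'a" and g :: "nat \<Rightarrow> nat"
  assumes submult: "\<And>a b. g (a + b) \<le> g a * g b"
    and pos: "\<And>n. 1 \<le> g n"
    and k: "\<forall>n S. finite S \<and> separated_set phi n e S \<longrightarrow> card S \<le> g (n + k)"
    and p: "1 \<le> p"
  shows "\<exists>A. \<forall>n. ln (max_separated phi n e) \<le> ln (g p) / p * n + A"
proof -
  define c M where "c = ln (g p) / p" and "M = Max (g ` {..<p})"
  have "0 < real M"
    using le_trans[OF pos[of 0] Max_ge[of "g ` {..<p}" "g 0"]] p by (simp add: M_def)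
  have "ln (max_separated phi n e) \<le> c * n + (c * k + ln M)" for n
  proof -
    define q where "q = (n + k) div p"
    have bounded: "\<forall>S. finite S \<and> separated_set phi n e S \<longrightarrow> card S \<le> g (n + k)"
      using k by blast
    then obtain S where S: "finite S" "separated_set phi n e S" "card S = max_separated phi n e"
      using max_separated_attained by blast
    then have "max_separated phi n e \<le> g (n + k)"
      using k by metis
    also have "\<dots> \<le> g p ^ q * M"
      using submultiplicative_div_bound[OF submult, of p "n + k"] p by (simp add: q_def M_def)
    finally have "real (max_separated phi n e) \<le> real (g p) ^ q * real M"
      unfolding of_nat_power[symmetric] of_nat_mult[symmetric] of_nat_le_iff .
    moreover have "0 < real (max_separated phi n e)" "0 < real (g p)"
      using max_separated_pos[OF bounded] pos[of p] by auto
    ultimately have "ln (max_separated phi n e) \<le> q * ln (g p) + ln M"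
      using \<open>0 < real M\<close> by (simp add: ln_mult ln_realpow flip: ln_le_cancel_iff)
    also have "q * ln (g p) \<le> c * (n + k)"
    proof -
      have "real q \<le> (n + k) / p"
        using div_times_less_eq_dividend[of "n + k" p] p
        by (simp add: q_def field_simps flip: of_nat_mult of_nat_add)
      then have "real q * ln (g p) \<le> (n + k) / p * ln (g p)"
        using pos[of p] by (intro mult_right_mono) auto
      then show ?thesis
        by (simp add: c_def mult.commute)
    qed
    finally show ?thesis
      by (simp add: algebra_simps)
  qed
  then show ?thesis
    unfolding c_def by blast
qed

lemma topological_entropy_le_growth_rate:
  fixes phi :: "'a::metric_space \<Rightarrow> 'a" and g :: "nat \<Rightarrow> nat"
  assumes submult: "\<And>a b. g (a + b) \<le> g a * g b"
    and pos: "\<And>n. 1 \<le> g n"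
    and dominated: "\<And>e. 0 < e \<Longrightarrow>
      \<exists>k. \<forall>n S. finite S \<and> separated_set phi n e S \<longrightarrow> card S \<le> g (n + k)"
    and p: "1 \<le> p"
  shows "topological_entropy phi \<le> ereal (ln (g p) / p)"
  unfolding topological_entropy_def
proof (rule SUP_least)
  fix e :: real
  assume "e \<in> {0<..}"
  then obtain k where "\<forall>n S. finite S \<and> separated_set phi n e S \<longrightarrow> card S \<le> g (n + k)"
    using dominated[of e] by auto
  then obtain A where "\<And>n. ln (max_separated phi n e) \<le> ln (g p) / p * n + A"
    using ln_max_separated_affine_bound[OF submult pos _ p] by blast
  then show "limsup (\<lambda>n. ereal (ln (max_separated phi n e) / n)) \<le> ereal (ln (g p) / p)"
    by (rule limsup_div_le_of_affine_bound)
qed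

lemma limsup_le_topological_entropy:
  "0 < e \<Longrightarrow> limsup (\<lambda>n. ereal (ln (max_separated phi n e) / n)) \<le> topological_entropy phi"
  unfolding topological_entropy_def by (intro SUP_upper) simp

lemma topological_entropy_nonneg:
  assumes "0 < e" "\<And>n. 1 \<le> max_separated phi n e"
  shows "0 \<le> topological_entropy phi"
proof -
  have "0 \<le> liminf (\<lambda>n. ereal (ln (max_separated phi n e) / n))"
    using assms(2) by (intro Liminf_bounded always_eventually) simp
  also have "\<dots> \<le> limsup (\<lambda>n. ereal (ln (max_separated phi n e) / n))"
    by (rule Liminf_le_Limsup) simp
  also have "\<dots> \<le> topological_entropy phi"
    by (rule limsup_le_topological_entropy[OF assms(1)])
  finally show ?thesis .
qed

lemma linear_bounds_of_odd_average:
  fixes H \<epsilon> L :: real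
  assumes "\<bar>H\<bar> + \<epsilon> < \<epsilon> * n" "0 < \<epsilon>" "1 \<le> n"
    and "H - \<epsilon> / 2 < L / real (2 * n - 1)" "L / real (2 * n - 1) < H + \<epsilon> / 2"
  shows "2 * (H - \<epsilon>) * n < L" "L < 2 * (H + \<epsilon>) * n"
proof -
  have "real (2 * n - 1) = 2 * real n - 1" "0 < 2 * real n - 1"
    using assms(3) by auto
  then have lo: "(H - \<epsilon> / 2) * (2 * real n - 1) < L" and hi: "L < (H + \<epsilon> / 2) * (2 * real n - 1)"
    using assms(4,5) by (simp_all add: pos_less_divide_eq pos_divide_less_eq)
  have gap: "0 < \<epsilon> * n - H + \<epsilon> / 2" "0 < \<epsilon> * n + H + \<epsilon> / 2"
    using assms(1,2) abs_ge_self[of H] abs_ge_minus_self[of H] by linarith+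
  have "2 * (H - \<epsilon>) * n < 2 * (H - \<epsilon>) * n + (\<epsilon> * n - H + \<epsilon> / 2)"
    using gap(1) by simp
  also have "\<dots> = (H - \<epsilon> / 2) * (2 * real n - 1)"
    by (simp add: algebra_simps)
  also have "\<dots> < L"
    by (rule lo)
  finally show "2 * (H - \<epsilon>) * n < L" .
  have "L < (H + \<epsilon> / 2) * (2 * real n - 1)"
    by (rule hi)
  also have "\<dots> = 2 * (H + \<epsilon>) * n - (\<epsilon> * n + H + \<epsilon> / 2)"
    by (simp add: algebra_simps)
  also have "\<dots> < 2 * (H + \<epsilon>) * n"
    using gap(2) by simp
  finally show "L < 2 * (H + \<epsilon>) * n" .
qed

lemma exp_bounds_at_odd_indices:
  fixes g :: "nat \<Rightarrow> real" and H \<epsilon> :: real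
  assumes lim: "(\<lambda>m. ln (g m) / m) \<longlonglongrightarrow> H" and pos: "\<And>m. 0 < g m" and "0 < \<epsilon>"
  shows "\<forall>\<^sub>F n in sequentially.
    exp (2 * (H - \<epsilon>) * n) < g (2 * n - 1) \<and> g (2 * n - 1) < exp (2 * (H + \<epsilon>) * n)"
proof -
  have "strict_mono (\<lambda>n::nat. 2 * n - 1)"
    by (rule strict_monoI_Suc) simp
  with lim have odd: "(\<lambda>n. ln (g (2 * n - 1)) / real (2 * n - 1)) \<longlonglongrightarrow> H"
    using LIMSEQ_subseq_LIMSEQ unfolding comp_def by fast
  have "\<forall>\<^sub>F n in sequentially. (\<bar>H\<bar> + \<epsilon>) / \<epsilon> < real n"
    using filterlim_real_sequentially[unfolded filterlim_at_top_dense] by blast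
  then have "\<forall>\<^sub>F n in sequentially. \<bar>H\<bar> + \<epsilon> < \<epsilon> * real n"
    by eventually_elim (use \<open>0 < \<epsilon>\<close> in \<open>simp add: pos_divide_less_eq mult.commute\<close>)
  moreover have "\<forall>\<^sub>F n in sequentially. H - \<epsilon> / 2 < ln (g (2 * n - 1)) / real (2 * n - 1)"
    using odd \<open>0 < \<epsilon>\<close> by (intro order_tendstoD) auto
  moreover have "\<forall>\<^sub>F n in sequentially. ln (g (2 * n - 1)) / real (2 * n - 1) < H + \<epsilon> / 2"
    using odd \<open>0 < \<epsilon>\<close> by (intro order_tendstoD) auto
  moreover have "\<forall>\<^sub>F n in sequentially. 1 \<le> n"
    by (rule eventually_ge_at_top)
  ultimately show ?thesis
  proof eventually_elim
    case (elim n)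
    then have "2 * (H - \<epsilon>) * n < ln (g (2 * n - 1))" "ln (g (2 * n - 1)) < 2 * (H + \<epsilon>) * n"
      using linear_bounds_of_odd_average \<open>0 < \<epsilon>\<close> by blast+
    moreover have "exp (ln (g (2 * n - 1))) = g (2 * n - 1)"
      using pos by simp
    ultimately show ?case
      by (metis exp_less_cancel_iff)
  qed
qed

section \<open>Local product structure and expansivity\<close>

locale smale_scales =
  fixes phi :: "'a::metric_space \<Rightarrow> 'a" and br :: "'a \<Rightarrow> 'a \<Rightarrow> 'a"
    and eX lamX e1 e2 :: real
  assumes smale: "smale_space phi br eX lamX"
    and eps1: "eps1_ok br eX e1"
    and eps2: "eps2_ok phi br e1 e2"
begin

lemma compact_UNIV: "compact (UNIV :: 'a set)"
  using smale by (simp add: smale_space_def)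

lemma bij_phi: "bij phi"
  using smale by (simp add: smale_space_def)

lemma eX_pos: "0 < eX"
  using smale by (simp add: smale_space_def)

lemma lamX_gt_1: "1 < lamX"
  using smale by (simp add: smale_space_def)

lemma continuous_on_bracket:
  "continuous_on {p. dist (fst p) (snd p) \<le> eX} (\<lambda>p. br (fst p) (snd p))"
  using smale by (simp add: smale_space_def)

lemma bracket_self [simp]: "br x x = x"
  using smale by (simp add: smale_space_def)

lemma bracket_right_absorb:
  "dist y z \<le> eX \<Longrightarrow> dist x (br y z) \<le> eX \<Longrightarrow> dist x z \<le> eX \<Longrightarrow> br x (br y z) = br x z"
  using smale unfolding smale_space_def by blast

lemma bracket_left_absorb:
  "dist x y \<le> eX \<Longrightarrow> dist (br x y) z \<le> eX \<Longrightarrow> dist x z \<le> eX \<Longrightarrow> br (br x y) z = br x z"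
  using smale unfolding smale_space_def by blast

lemma phi_bracket:
  "dist x y \<le> eX \<Longrightarrow> dist (phi x) (phi y) \<le> eX \<Longrightarrow> phi (br x y) = br (phi x) (phi y)"
  using smale unfolding smale_space_def by blast

lemma stable_contraction:
  "y \<in> Xs br x eX \<Longrightarrow> z \<in> Xs br x eX \<Longrightarrow> dist (phi y) (phi z) \<le> dist y z / lamX"
  using smale unfolding smale_space_def by blast

lemma unstable_contraction:
  "y \<in> Xu br x eX \<Longrightarrow> z \<in> Xu br x eX \<Longrightarrow> dist (inv phi y) (inv phi z) \<le> dist y z / lamX"
  using smale unfolding smale_space_def by blast

lemma e1_pos: "0 < e1" and e1_le: "e1 \<le> eX / 2"
  using eps1 by (auto simp: eps1_ok_def)

lemma bracket_dist_e1:
  "dist x y \<le> e1 \<Longrightarrow> dist x (br x y) < eX / 2 \<and> dist y (br x y) < eX / 2"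
  using eps1 by (auto simp: eps1_ok_def)

lemma e2_pos: "0 < e2" and e2_lt: "e2 < e1 / 12"
  using eps2 by (auto simp: eps2_ok_def)

lemma bracket_dist_e2:
  "dist x y \<le> e2 \<Longrightarrow> dist (br x y) x \<le> e1 / 4 \<and> dist (br x y) y \<le> e1 / 4"
  using eps2 by (auto simp: eps2_ok_def)

lemma scales_le: "e2 \<le> e1" "e1 \<le> eX"
  using e1_pos e1_le e2_lt by auto

lemma phi_bracket_e2:
  "dist x y \<le> e2 \<Longrightarrow> dist (phi x) (phi y) \<le> e2 \<Longrightarrow> phi (br x y) = br (phi x) (phi y)"
  using phi_bracket scales_le by simp

lemma homeomorphism_iterate: "homeomorphism UNIV UNIV (phi ^^ i) (inv phi ^^ i)"
proof
  have "continuous_on UNIV (f ^^ i)" if "continuous_on UNIV f" for f :: "'a \<Rightarrow> 'a"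
    by (induction i) (auto intro: continuous_on_compose2[OF that])
  then show "continuous_on UNIV (phi ^^ i)" "continuous_on UNIV (inv phi ^^ i)"
    using smale by (auto simp: smale_space_def)
  show "(inv phi ^^ i) ((phi ^^ i) x) = x" "(phi ^^ i) ((inv phi ^^ i) x) = x" for x
    using inv_fn_o_fn_is_id[OF bij_phi, of i] fn_o_inv_fn_is_id[OF bij_phi, of i]
    by (auto dest: fun_cong[where x = x])
qed auto

lemma inv_iterate_iterate [simp]: "(inv phi ^^ i) ((phi ^^ i) x) = x"
  and iterate_inv_iterate [simp]: "(phi ^^ i) ((inv phi ^^ i) x) = x"
  using homeomorphism_iterate[of i] by (auto simp: homeomorphism_def)

lemma continuous_on_iterate: "continuous_on UNIV (phi ^^ i)"
  using homeomorphism_iterate[of i] by (simp add: homeomorphism_def)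

lemma interior_image_iterate: "interior ((phi ^^ i) ` S) = (phi ^^ i) ` interior S"
  by (rule homeomorphism_UNIV_interior_image[OF homeomorphism_iterate])

lemma interior_vimage_iterate: "interior ((phi ^^ i) -` S) = (phi ^^ i) -` interior S"
  by (rule homeomorphism_UNIV_interior_vimage[OF homeomorphism_iterate])

lemma iterate_bracket:
  assumes "\<And>j. j \<le> i \<Longrightarrow> dist ((phi ^^ j) a) ((phi ^^ j) b) \<le> e2"
  shows "(phi ^^ i) (br a b) = br ((phi ^^ i) a) ((phi ^^ i) b)"
  using assms
proof (induction i)
  case (Suc i)
  then show ?case
    using Suc.prems[of i] Suc.prems[of "Suc i"] phi_bracket_e2 by simp
qed simp

lemma bracket_mem_local_sets:
  assumes "dist p q \<le> e2" "e1 / 4 < r"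
  shows "br p q \<in> Xs br p r" "br p q \<in> Xu br q r"
proof -
  have d: "dist p (br p q) \<le> e1 / 4" "dist (br p q) q \<le> e1 / 4" "dist p q \<le> eX"
    using bracket_dist_e2[OF assms(1)] assms(1) scales_le by (auto simp: dist_commute)
  then have "br p (br p q) = br p q" "br (br p q) q = br p q"
    using bracket_right_absorb[of p q p] bracket_left_absorb[of p q q] scales_le e1_pos by auto
  then show "br p q \<in> Xs br p r" "br p q \<in> Xu br q r"
    using d assms(2) by (auto simp: Xs_def Xu_def dist_commute)
qed

lemma stable_orbit_contraction:
  assumes close: "\<And>j. j \<le> N \<Longrightarrow> dist ((phi ^^ j) a) ((phi ^^ j) b) \<le> e2" and "j \<le> N"
  shows "dist ((phi ^^ j) a) ((phi ^^ j) (br a b)) \<le> dist a (br a b) / lamX ^ j"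
  using \<open>j \<le> N\<close>
proof (induction j)
  case (Suc j)
  have "dist ((phi ^^ j) a) ((phi ^^ j) b) \<le> e2"
    using Suc.prems close by simp
  then have "br ((phi ^^ j) a) ((phi ^^ j) b) \<in> Xs br ((phi ^^ j) a) eX"
    using bracket_mem_local_sets scales_le e1_pos by simp
  moreover have "(phi ^^ j) a \<in> Xs br ((phi ^^ j) a) eX"
    using eX_pos by (simp add: Xs_def)
  ultimately have "dist ((phi ^^ Suc j) a) ((phi ^^ Suc j) (br a b))
      \<le> dist ((phi ^^ j) a) ((phi ^^ j) (br a b)) / lamX"
    using stable_contraction iterate_bracket[of j a b] close Suc.prems by simp
  also have "\<dots> \<le> dist a (br a b) / lamX ^ j / lamX"
    using Suc lamX_gt_1 by (intro divide_right_mono) auto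
  finally show ?case
    by (simp add: divide_divide_eq_left mult.commute)
qed simp

lemma unstable_orbit_contraction:
  assumes close: "\<And>j. j \<le> N \<Longrightarrow> dist ((phi ^^ j) a) ((phi ^^ j) b) \<le> e2" and "j \<le> N"
  shows "dist ((phi ^^ j) (br a b)) ((phi ^^ j) b)
    \<le> dist ((phi ^^ N) (br a b)) ((phi ^^ N) b) / lamX ^ (N - j)"
  using \<open>j \<le> N\<close>
proof (induction j rule: inc_induct)
  case (step j)
  have "dist ((phi ^^ Suc j) a) ((phi ^^ Suc j) b) \<le> e2"
    using step.hyps close[of "Suc j"] by simp
  then have "br ((phi ^^ Suc j) a) ((phi ^^ Suc j) b) \<in> Xu br ((phi ^^ Suc j) b) eX"
    using bracket_mem_local_sets scales_le e1_pos by simp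
  moreover have "(phi ^^ Suc j) b \<in> Xu br ((phi ^^ Suc j) b) eX"
    using eX_pos by (simp add: Xu_def)
  ultimately have "dist (inv phi ((phi ^^ Suc j) (br a b))) (inv phi ((phi ^^ Suc j) b))
      \<le> dist ((phi ^^ Suc j) (br a b)) ((phi ^^ Suc j) b) / lamX"
    using unstable_contraction iterate_bracket[of "Suc j" a b] close step.hyps by simp
  moreover have "inv phi ((phi ^^ Suc j) x) = (phi ^^ j) x" for x
    using bij_phi by (simp add: bij_is_inj)
  ultimately have "dist ((phi ^^ j) (br a b)) ((phi ^^ j) b)
      \<le> dist ((phi ^^ Suc j) (br a b)) ((phi ^^ Suc j) b) / lamX"
    by (simp only:)
  also have "\<dots> \<le> dist ((phi ^^ N) (br a b)) ((phi ^^ N) b) / lamX ^ (N - Suc j) / lamX"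
    using step.IH lamX_gt_1 by (intro divide_right_mono) auto
  moreover have "N - j = Suc (N - Suc j)"
    using step.hyps by simp
  ultimately show ?case
    by (simp add: divide_divide_eq_left mult.commute)
qed simp

lemma close_orbit_bound:
  assumes close: "\<And>j. j \<le> N \<Longrightarrow> dist ((phi ^^ j) a) ((phi ^^ j) b) \<le> e2" and "j \<le> N"
  shows "dist ((phi ^^ j) a) ((phi ^^ j) b) \<le> e1 / 4 / lamX ^ j + e1 / 4 / lamX ^ (N - j)"
proof -
  have "dist a (br a b) \<le> e1 / 4"
    using bracket_dist_e2 close[of 0] by (simp add: dist_commute)
  then have "dist a (br a b) / lamX ^ j \<le> e1 / 4 / lamX ^ j"
    using lamX_gt_1 by (intro divide_right_mono) auto
  moreover have "dist ((phi ^^ N) (br a b)) ((phi ^^ N) b) \<le> e1 / 4"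
    using bracket_dist_e2 close iterate_bracket[of N a b] by simp
  then have "dist ((phi ^^ N) (br a b)) ((phi ^^ N) b) / lamX ^ (N - j) \<le> e1 / 4 / lamX ^ (N - j)"
    using lamX_gt_1 by (intro divide_right_mono) auto
  ultimately have "dist ((phi ^^ j) a) ((phi ^^ j) (br a b)) \<le> e1 / 4 / lamX ^ j"
    "dist ((phi ^^ j) (br a b)) ((phi ^^ j) b) \<le> e1 / 4 / lamX ^ (N - j)"
    using stable_orbit_contraction[OF close \<open>j \<le> N\<close>] unstable_orbit_contraction[OF close \<open>j \<le> N\<close>]
    by linarith+
  then show ?thesis
    using dist_triangle[of "(phi ^^ j) a" "(phi ^^ j) b" "(phi ^^ j) (br a b)"] by linarith
qed

lemma close_orbit_window:
  assumes "0 < e"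
  obtains k where "\<And>x y m j. (\<And>i. i < m + 2 * k \<Longrightarrow> dist ((phi ^^ i) x) ((phi ^^ i) y) \<le> e2)
    \<Longrightarrow> j < m \<Longrightarrow> dist ((phi ^^ (j + k)) x) ((phi ^^ (j + k)) y) \<le> e"
proof -
  obtain k where "e1 / (2 * e) < lamX ^ k"
    using real_arch_pow[OF lamX_gt_1] by blast
  then have small: "e1 / 4 / lamX ^ k + e1 / 4 / lamX ^ k \<le> e"
    using lamX_gt_1 \<open>0 < e\<close> by (simp add: field_simps)
  show ?thesis
  proof (rule that)
    fix x y m j
    assume close: "\<And>i. i < m + 2 * k \<Longrightarrow> dist ((phi ^^ i) x) ((phi ^^ i) y) \<le> e2" and "j < m"
    define N where "N = m + 2 * k - 1"
    have "dist ((phi ^^ (j + k)) x) ((phi ^^ (j + k)) y)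
        \<le> e1 / 4 / lamX ^ (j + k) + e1 / 4 / lamX ^ (N - (j + k))"
      using \<open>j < m\<close> close by (intro close_orbit_bound) (auto simp: N_def)
    also have "\<dots> \<le> e1 / 4 / lamX ^ k + e1 / 4 / lamX ^ k"
      using lamX_gt_1 e1_pos \<open>j < m\<close>
      by (intro add_mono divide_left_mono power_increasing mult_pos_pos) (auto simp: N_def)
    finally show "dist ((phi ^^ (j + k)) x) ((phi ^^ (j + k)) y) \<le> e"
      using small by linarith
  qed
qed

lemma isCont_bracket:
  assumes "isCont f z" "isCont g z" "dist (f z) (g z) < eX"
  shows "isCont (\<lambda>r. br (f r) (g r)) z"
proof -
  have "open {q :: 'a \<times> 'a. dist (fst q) (snd q) < eX}"
    by (intro open_Collect_less continuous_intros)
  then have "{q :: 'a \<times> 'a. dist (fst q) (snd q) < eX} \<subseteq> interior {q. dist (fst q) (snd q) \<le> eX}"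
    by (intro interior_maximal) auto
  then have "(f z, g z) \<in> interior {q. dist (fst q) (snd q) \<le> eX}"
    using assms(3) by auto
  then have "isCont (\<lambda>q. br (fst q) (snd q)) (f z, g z)"
    by (rule continuous_on_interior[OF continuous_on_bracket])
  from isCont_o2[OF continuous_Pair[OF assms(1,2)] this] show ?thesis
    by simp
qed

lemma bracket_bracket_ends:
  assumes "dist x x' \<le> e2"
  shows "br (br x x') x = x" "br x' (br x x') = x'"
proof -
  have "dist (br x x') x \<le> eX" "dist x' (br x x') \<le> eX" "dist x x' \<le> eX"
    using bracket_dist_e2[OF assms] assms scales_le e1_pos by (auto simp: dist_commute)
  then show "br (br x x') x = x" "br x' (br x x') = x'"
    using bracket_left_absorb[of x x' x] bracket_right_absorb[of x x' x'] eX_pos by auto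
qed

lemma open_close_orbit_pairs:
  "open {q :: 'a \<times> 'a. \<forall>i<m. dist ((phi ^^ i) (fst q)) ((phi ^^ i) (snd q)) < r}"
proof -
  have "continuous_on UNIV (\<lambda>q :: 'a \<times> 'a. (phi ^^ i) (fst q))"
    "continuous_on UNIV (\<lambda>q :: 'a \<times> 'a. (phi ^^ i) (snd q))" for i
    by (auto intro!: continuous_on_compose2[OF continuous_on_iterate] continuous_intros)
  then have "open {q :: 'a \<times> 'a. dist ((phi ^^ i) (fst q)) ((phi ^^ i) (snd q)) < r}" for i
    by (intro open_Collect_less continuous_intros)
  moreover have "{q :: 'a \<times> 'a. \<forall>i<m. dist ((phi ^^ i) (fst q)) ((phi ^^ i) (snd q)) < r} =
      (\<Inter>i<m. {q. dist ((phi ^^ i) (fst q)) ((phi ^^ i) (snd q)) < r})"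
    by auto
  ultimately show ?thesis
    by (auto intro: open_INT)
qed

lemma bracket_bracket_cancel:
  assumes "dist p x \<le> e1" "dist x' p \<le> e1"
  shows "br (br p x) (br x' p) = p"
proof -
  have d: "dist p (br p x) < eX / 2" "dist x' (br x' p) < eX / 2" "dist p (br x' p) < eX / 2"
    using bracket_dist_e1[OF assms(1)] bracket_dist_e1[OF assms(2)] by auto
  then have "dist (br p x) (br x' p) < eX"
    using dist_triangle[of "br p x" "br x' p" p] by (simp add: dist_commute)
  moreover have "dist p (br x' p) \<le> eX"
    using d(3) zero_le_dist[of p "br x' p"] by linarith
  ultimately have "br (br p x) (br x' p) = br p (br x' p)"
    using bracket_left_absorb[of p x "br x' p"] assms scales_le by auto
  also have "\<dots> = p"
    using bracket_right_absorb[of x' p p] assms d scales_le eX_pos by (auto simp: dist_commute)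
  finally show ?thesis .
qed

lemma image_iterate_eq_vimage: "(phi ^^ n) ` A = (inv phi ^^ n) -` A"
  using homeomorphism_UNIV_vimage_eq_image[OF homeomorphism_sym[THEN iffD1, OF homeomorphism_iterate]]
  by (rule sym)

lemma image_inv_iterate_eq_vimage: "(inv phi ^^ n) ` A = (phi ^^ n) -` A"
  by (rule homeomorphism_UNIV_vimage_eq_image[OF homeomorphism_iterate, symmetric])

lemma image_zpow_neg: "zpow phi (- i) ` A = zpow phi i -` A"
proof (cases "0 \<le> i")
  case True
  then show ?thesis
    by (cases "i = 0") (simp_all add: zpow_def image_inv_iterate_eq_vimage)
next
  case False
  then show ?thesis
    by (simp add: zpow_def image_iterate_eq_vimage)
qed

lemma zpow_iterate:
  assumes "- int k \<le> i"
  shows "zpow phi i ((phi ^^ k) y) = (phi ^^ nat (i + int k)) y"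
proof (cases "0 \<le> i")
  case True
  then show ?thesis
    by (simp add: zpow_def funpow_add nat_add_distrib)
next
  case False
  define j where "j = k - nat (- i)"
  have j: "k = nat (- i) + j"
    using assms False by (simp add: j_def)
  then have "(phi ^^ k) y = (phi ^^ nat (- i)) ((phi ^^ j) y)"
    by (simp add: funpow_add)
  then show ?thesis
    using False j by (simp add: zpow_def)
qed

end

section \<open>Cylinders of a Markov partition\<close>

locale smale_markov = smale_scales +
  fixes R1 :: "'a::metric_space set set"
  assumes markov: "markov_partition phi br e1 R1"
    and small_rectangles: "\<forall>R\<in>R1. diameter R \<le> e2"
begin

lemma finite_R1: "finite R1"
  using markov by (simp add: markov_partition_def)

lemma R1_cover: "\<exists>R\<in>R1. x \<in> R"
  using markov by (auto simp: markov_partition_def)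

lemma closed_rectangle: "R \<in> R1 \<Longrightarrow> closed R"
  using markov by (simp add: markov_partition_def proper_rectangle_def)

lemma bracket_in_rectangle: "R \<in> R1 \<Longrightarrow> x \<in> R \<Longrightarrow> y \<in> R \<Longrightarrow> br x y \<in> R"
  using markov by (simp add: markov_partition_def proper_rectangle_def rectangle_def)

lemma rectangle_eq_of_interior_meet:
  assumes "R \<in> R1" "R' \<in> R1" "interior (R \<inter> R') \<noteq> {}"
  shows "R = R'"
proof -
  have "\<forall>R\<in>R1. \<forall>R'\<in>R1. R \<noteq> R' \<longrightarrow> interior R \<inter> interior R' = {}"
    using markov by (simp add: markov_partition_def)
  then show ?thesis
    using assms interior_Int by blast
qed

lemma markov_images:
  assumes "Ri \<in> R1" "Rj \<in> R1" "x \<in> interior Ri" "phi x \<in> interior Rj"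
  shows markov_unstable: "XuR br e1 (phi x) Rj \<subseteq> phi ` XuR br e1 x Ri"
    and markov_stable: "phi ` XsR br e1 x Ri \<subseteq> XsR br e1 (phi x) Rj"
proof -
  have "\<forall>Ri\<in>R1. \<forall>Rj\<in>R1. \<forall>x. x \<in> interior Ri \<and> phi x \<in> interior Rj \<longrightarrow>
      XuR br e1 (phi x) Rj \<subseteq> phi ` XuR br e1 x Ri \<and> phi ` XsR br e1 x Ri \<subseteq> XsR br e1 (phi x) Rj"
    using markov unfolding markov_partition_def by (elim conjE)
  then show "XuR br e1 (phi x) Rj \<subseteq> phi ` XuR br e1 x Ri" "phi ` XsR br e1 x Ri \<subseteq> XsR br e1 (phi x) Rj"
    using assms by simp_all
qed

lemma dist_in_rectangle:
  assumes "R \<in> R1" "x \<in> R" "y \<in> R"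
  shows "dist x y \<le> e2"
proof -
  have "bounded R"
    using compact_imp_bounded[OF compact_UNIV] bounded_subset by blast
  then have "dist x y \<le> diameter R"
    using assms(2,3) by (rule diameter_bounded_bound)
  also have "\<dots> \<le> e2"
    using assms(1) small_rectangles by blast
  finally show ?thesis .
qed

definition words :: "nat \<Rightarrow> (nat \<Rightarrow> 'a set) set" where
  "words m = {w. \<forall>i<m. w i \<in> R1}"

definition cylinder :: "nat \<Rightarrow> (nat \<Rightarrow> 'a set) \<Rightarrow> 'a set" where
  "cylinder m w = {x. \<forall>i<m. (phi ^^ i) x \<in> w i}"

definition cylinders :: "nat \<Rightarrow> 'a set set" where
  "cylinders m = {cylinder m w | w. w \<in> words m \<and> interior (cylinder m w) \<noteq> {}}"

lemma finite_cylinder_image: "finite (cylinder m ` words m)"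
proof -
  have "cylinder m ` words m \<subseteq> cylinder m ` (\<Pi>\<^sub>E i\<in>{..<m}. R1)"
  proof (rule image_subsetI)
    fix w
    assume "w \<in> words m"
    then have "restrict w {..<m} \<in> (\<Pi>\<^sub>E i\<in>{..<m}. R1)"
      by (simp add: words_def)
    moreover have "cylinder m (restrict w {..<m}) = cylinder m w"
      by (simp add: cylinder_def)
    ultimately show "cylinder m w \<in> cylinder m ` (\<Pi>\<^sub>E i\<in>{..<m}. R1)"
      by (metis image_eqI)
  qed
  then show ?thesis
    by (rule finite_subset) (intro finite_imageI finite_PiE finite_R1 finite_lessThan)
qed

lemma cylinders_subset: "cylinders m \<subseteq> cylinder m ` words m"
  unfolding cylinders_def by blast

lemma finite_cylinders: "finite (cylinders m)"
  using finite_cylinder_image cylinders_subset by (rule finite_subset[rotated])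

lemma closed_cylinder: "w \<in> words m \<Longrightarrow> closed (cylinder m w)"
proof -
  assume "w \<in> words m"
  then have "closed ((phi ^^ i) -` w i)" if "i < m" for i
    using continuous_on_closed_vimage[of UNIV "phi ^^ i"] continuous_on_iterate closed_rectangle that
    by (simp add: words_def)
  moreover have "cylinder m w = (\<Inter>i<m. (phi ^^ i) -` w i)"
    by (auto simp: cylinder_def)
  ultimately show ?thesis
    by (auto intro: closed_INT)
qed

lemma cylinder_image_cover: "\<exists>w\<in>words m. x \<in> cylinder m w"
proof -
  define w where "w i = (SOME R. R \<in> R1 \<and> (phi ^^ i) x \<in> R)" for i
  have "w i \<in> R1 \<and> (phi ^^ i) x \<in> w i" for i
    unfolding w_def by (rule someI_ex) (use R1_cover in blast)
  then show ?thesis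
    by (auto simp: words_def cylinder_def)
qed

text \<open>The cylinders with empty interior are finitely many and closed, so their union has
  empty interior and cannot contain the open complement of the union of the others.\<close>
lemma cylinders_cover: "\<exists>C\<in>cylinders m. x \<in> C"
proof -
  let ?thin = "cylinder m ` words m - cylinders m"
  have closed: "closed C" if "C \<in> cylinder m ` words m" for C
    using that closed_cylinder by blast
  then have thin: "closed C \<and> interior C = {}" if "C \<in> ?thin" for C
    using that by (auto simp: cylinders_def)
  have "closed (\<Union>(cylinders m))"
    using cylinders_subset[of m] closed by (intro closed_Union finite_cylinders) blast
  moreover have "- \<Union>(cylinders m) \<subseteq> \<Union>?thin"
    using cylinder_image_cover by blast
  ultimately have "- \<Union>(cylinders m) \<subseteq> interior (\<Union>?thin)"
    by (intro interior_maximal) auto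
  also have "\<dots> = {}"
    using finite_cylinder_image thin by (intro interior_Union_closed_empty) auto
  finally show ?thesis
    by blast
qed

lemma card_cylinders_pos: "1 \<le> card (cylinders m)"
proof -
  have "cylinders m \<noteq> {}"
    using cylinders_cover by blast
  then show ?thesis
    using finite_cylinders by (simp add: Suc_le_eq card_gt_0_iff)
qed

lemma iterate_mem_interior:
  assumes "x \<in> interior (cylinder m w)" "i < m"
  shows "(phi ^^ i) x \<in> interior (w i)"
proof -
  have "cylinder m w \<subseteq> (phi ^^ i) -` w i"
    using assms(2) by (auto simp: cylinder_def)
  then show ?thesis
    using interior_mono assms(1) interior_vimage_iterate by blast
qed

lemma words_eq_of_interior_meet:
  assumes "w \<in> words m" "w' \<in> words m" "interior (cylinder m w \<inter> cylinder m w') \<noteq> {}" "i < m"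
  shows "w i = w' i"
proof -
  have "cylinder m w \<inter> cylinder m w' \<subseteq> (phi ^^ i) -` (w i \<inter> w' i)"
    using assms(4) by (auto simp: cylinder_def)
  then have "interior (w i \<inter> w' i) \<noteq> {}"
    using interior_mono[of _ "(phi ^^ i) -` (w i \<inter> w' i)"] assms(3)
    unfolding interior_vimage_iterate by blast
  then show ?thesis
    using assms rectangle_eq_of_interior_meet by (simp add: words_def)
qed

lemma bracket_orbit_stable:
  assumes w: "w \<in> words m" and a: "a \<in> interior (cylinder m w)" and b: "b \<in> w 0"
    and close: "\<And>i. i < m \<Longrightarrow> dist ((phi ^^ i) a) ((phi ^^ i) b) \<le> e2" and "i < m"
  shows "br ((phi ^^ i) a) ((phi ^^ i) b) \<in> XsR br e1 ((phi ^^ i) a) (w i)"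
  using \<open>i < m\<close>
proof (induction i)
  case 0
  have "a \<in> w 0"
    using iterate_mem_interior[OF a 0] interior_subset by auto
  then have "br a b \<in> w 0"
    using w b 0 bracket_in_rectangle by (simp add: words_def)
  moreover have "br a b \<in> Xs br a (2 * e1)"
    using bracket_mem_local_sets close[OF 0] e1_pos by simp
  ultimately show ?case
    by (simp add: XsR_def)
next
  case (Suc i)
  have "w i \<in> R1" "w (Suc i) \<in> R1"
    using w Suc.prems by (auto simp: words_def)
  moreover have "(phi ^^ i) a \<in> interior (w i)" "phi ((phi ^^ i) a) \<in> interior (w (Suc i))"
    using iterate_mem_interior[OF a, of i] iterate_mem_interior[OF a, of "Suc i"] Suc.prems by auto
  ultimately have "phi ` XsR br e1 ((phi ^^ i) a) (w i) \<subseteq> XsR br e1 (phi ((phi ^^ i) a)) (w (Suc i))"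
    by (rule markov_stable)
  moreover have "br ((phi ^^ i) a) ((phi ^^ i) b) \<in> XsR br e1 ((phi ^^ i) a) (w i)"
    using Suc by simp
  ultimately have "phi (br ((phi ^^ i) a) ((phi ^^ i) b)) \<in> XsR br e1 (phi ((phi ^^ i) a)) (w (Suc i))"
    by blast
  moreover have "phi (br ((phi ^^ i) a) ((phi ^^ i) b)) = br ((phi ^^ Suc i) a) ((phi ^^ Suc i) b)"
    using close[of i] close[of "Suc i"] Suc.prems phi_bracket_e2 by simp
  ultimately show ?case
    by simp
qed

lemma bracket_orbit_unstable:
  assumes w': "w' \<in> words m" and b: "b \<in> interior (cylinder m w')"
    and last: "br ((phi ^^ (m - 1)) a) ((phi ^^ (m - 1)) b) \<in> w' (m - 1)"
    and close: "\<And>i. i < m \<Longrightarrow> dist ((phi ^^ i) a) ((phi ^^ i) b) \<le> e2" and "i < m"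
  shows "br ((phi ^^ i) a) ((phi ^^ i) b) \<in> XuR br e1 ((phi ^^ i) b) (w' i)"
proof -
  have "i \<le> m - 1"
    using \<open>i < m\<close> by simp
  then show ?thesis
  proof (induction i rule: inc_induct)
    case base
    have "br ((phi ^^ (m - 1)) a) ((phi ^^ (m - 1)) b) \<in> Xu br ((phi ^^ (m - 1)) b) (2 * e1)"
      using bracket_mem_local_sets close \<open>i < m\<close> e1_pos by simp
    then show ?case
      using last by (simp add: XuR_def)
  next
    case (step j)
    have "w' j \<in> R1" "w' (Suc j) \<in> R1"
      using w' step.hyps by (auto simp: words_def)
    moreover have "(phi ^^ j) b \<in> interior (w' j)" "phi ((phi ^^ j) b) \<in> interior (w' (Suc j))"
      using iterate_mem_interior[OF b, of j] iterate_mem_interior[OF b, of "Suc j"] step.hyps by auto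
    ultimately have "XuR br e1 (phi ((phi ^^ j) b)) (w' (Suc j)) \<subseteq> phi ` XuR br e1 ((phi ^^ j) b) (w' j)"
      by (rule markov_unstable)
    then obtain y where y: "y \<in> XuR br e1 ((phi ^^ j) b) (w' j)"
      and "phi y = br ((phi ^^ Suc j) a) ((phi ^^ Suc j) b)"
      using step.IH by auto
    moreover have "phi (br ((phi ^^ j) a) ((phi ^^ j) b)) = br ((phi ^^ Suc j) a) ((phi ^^ Suc j) b)"
      using close[of j] close[of "Suc j"] step.hyps phi_bracket_e2 by simp
    ultimately have "phi y = phi (br ((phi ^^ j) a) ((phi ^^ j) b))"
      by simp
    then have "y = br ((phi ^^ j) a) ((phi ^^ j) b)"
      using bij_is_inj[OF bij_phi] by (simp add: inj_eq)
    then show ?case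
      using y by simp
  qed
qed

text \<open>The Markov property lets the bracket of two points follow the itinerary of the first
  one forwards and of the second one backwards, so that it lies in both cylinders.\<close>
lemma bracket_in_both_cylinders:
  assumes w: "w \<in> words m" and w': "w' \<in> words m" and "0 < m"
    and ends: "w 0 = w' 0" "w (m - 1) = w' (m - 1)"
    and a: "a \<in> interior (cylinder m w)" and b: "b \<in> interior (cylinder m w')"
    and close: "\<And>i. i < m \<Longrightarrow> dist ((phi ^^ i) a) ((phi ^^ i) b) \<le> e2"
  shows "br a b \<in> cylinder m w \<inter> cylinder m w'"
proof -
  have "b \<in> w 0"
    using iterate_mem_interior[OF b \<open>0 < m\<close>] interior_subset ends(1) by auto
  then have stable: "br ((phi ^^ i) a) ((phi ^^ i) b) \<in> w i" if "i < m" for i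
    using bracket_orbit_stable[OF w a _ close that] by (simp add: XsR_def)
  have "br ((phi ^^ (m - 1)) a) ((phi ^^ (m - 1)) b) \<in> w (m - 1)"
    using stable \<open>0 < m\<close> by simp
  then have "br ((phi ^^ (m - 1)) a) ((phi ^^ (m - 1)) b) \<in> w' (m - 1)"
    using ends(2) by simp
  then have "br ((phi ^^ i) a) ((phi ^^ i) b) \<in> w' i" if "i < m" for i
    using bracket_orbit_unstable[OF w' b _ close that] by (simp add: XuR_def)
  moreover have "(phi ^^ i) (br a b) = br ((phi ^^ i) a) ((phi ^^ i) b)" if "i < m" for i
    using close that by (intro iterate_bracket) auto
  ultimately show ?thesis
    using stable by (simp add: cylinder_def)
qed

text \<open>Points near \<open>z = [x, x']\<close> are recovered as \<open>p = [[p, x], [x', p]]\<close>, and by continuity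
  \<open>[p, x]\<close> and \<open>[x', p]\<close> still lie in the two cylinders with close orbits, so a whole
  neighbourhood of \<open>z\<close> lies in both cylinders.\<close>
lemma interior_cylinders_meet:
  assumes w: "w \<in> words m" and w': "w' \<in> words m" and "0 < m"
    and ends: "w 0 = w' 0" "w (m - 1) = w' (m - 1)"
    and x: "x \<in> interior (cylinder m w)" and x': "x' \<in> interior (cylinder m w')"
    and close: "\<And>i. i < m \<Longrightarrow> dist ((phi ^^ i) x) ((phi ^^ i) x') < e2"
  shows "interior (cylinder m w \<inter> cylinder m w') \<noteq> {}"
proof -
  define U where "U = (interior (cylinder m w) \<times> interior (cylinder m w')) \<inter>
    {q. \<forall>i<m. dist ((phi ^^ i) (fst q)) ((phi ^^ i) (snd q)) < e2}"
  have "open U"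
    unfolding U_def by (intro open_Int open_Times open_close_orbit_pairs open_interior)
  define z where "z = br x x'"
  have dxx': "dist x x' \<le> e2"
    using close[OF \<open>0 < m\<close>] by simp
  then have dz: "dist z x \<le> e1 / 4" "dist z x' \<le> e1 / 4"
    using bracket_dist_e2 by (auto simp: z_def)
  have "br z x = x" "br x' z = x'"
    using bracket_bracket_ends[OF dxx'] by (simp_all add: z_def)
  moreover have "(x, x') \<in> U"
    using x x' close by (simp add: U_def)
  moreover have "isCont (\<lambda>p. (br p x, br x' p)) z"
    using dz scales_le e1_pos
    by (intro continuous_Pair isCont_bracket continuous_ident continuous_const) (auto simp: dist_commute)
  ultimately obtain S where S: "open S" "z \<in> S" "\<And>p. p \<in> S \<Longrightarrow> (br p x, br x' p) \<in> U"
    using \<open>open U\<close> unfolding continuous_at_open by (metis (no_types, lifting))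
  have "S \<inter> ball z (e1 / 4) \<subseteq> cylinder m w \<inter> cylinder m w'"
  proof
    fix p
    assume p: "p \<in> S \<inter> ball z (e1 / 4)"
    then have "dist z p < e1 / 4"
      by simp
    then have "dist p x \<le> e1" "dist x' p \<le> e1"
      using dz dist_triangle[of p x z] dist_triangle[of x' p z] dist_commute[of z p] dist_commute[of z x'] e1_pos
      by linarith+
    then have "p = br (br p x) (br x' p)"
      by (simp add: bracket_bracket_cancel)
    also have "\<dots> \<in> cylinder m w \<inter> cylinder m w'"
      using S(3)[of p] p by (intro bracket_in_both_cylinders[OF w w' \<open>0 < m\<close> ends])
        (auto simp: U_def less_imp_le)
    finally show "p \<in> cylinder m w \<inter> cylinder m w'" .
  qed
  then have "z \<in> interior (cylinder m w \<inter> cylinder m w')"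
    using S e1_pos by (intro interior_maximal[THEN subsetD, of "S \<inter> ball z (e1 / 4)"]) auto
  then show ?thesis
    by blast
qed

lemma cylinder_eq_of_common_shadow:
  assumes w: "w \<in> words m" and w': "w' \<in> words m" and "0 < m"
    and ends: "w 0 = w' 0" "w (m - 1) = w' (m - 1)"
    and x: "x \<in> interior (cylinder m w)" and x': "x' \<in> interior (cylinder m w')"
    and y: "\<And>i. i < m \<Longrightarrow> dist ((phi ^^ i) x) ((phi ^^ i) y) \<le> e2 / 3"
      "\<And>i. i < m \<Longrightarrow> dist ((phi ^^ i) x') ((phi ^^ i) y) \<le> e2 / 3"
  shows "cylinder m w = cylinder m w'"
proof -
  have "dist ((phi ^^ i) x) ((phi ^^ i) x') < e2" if "i < m" for i
    using y[OF that] dist_triangle[of "(phi ^^ i) x" "(phi ^^ i) x'" "(phi ^^ i) y"] e2_pos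
    by (simp add: dist_commute)
  then show ?thesis
    using words_eq_of_interior_meet[OF w w' interior_cylinders_meet[OF w w' \<open>0 < m\<close> ends x x']]
    by (simp add: cylinder_def)
qed

lemma cylinder_add:
  "cylinder (a + b) w = cylinder a w \<inter> (phi ^^ a) -` cylinder b (\<lambda>i. w (a + i))"
proof -
  have split: "(\<forall>i<a + b. P i) \<longleftrightarrow> (\<forall>i<a. P i) \<and> (\<forall>i<b. P (a + i))" for P
    by (metis add_less_cancel_left le_add_diff_inverse not_le trans_less_add1)
  have "(phi ^^ (a + i)) x = (phi ^^ i) ((phi ^^ a) x)" for i x
    by (metis add.commute comp_apply funpow_add)
  then have "x \<in> cylinder (a + b) w \<longleftrightarrow> x \<in> cylinder a w \<and> (phi ^^ a) x \<in> cylinder b (\<lambda>i. w (a + i))"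
    for x
    using split[of "\<lambda>i. (phi ^^ i) x \<in> w i"] by (simp add: cylinder_def)
  then show ?thesis
    by blast
qed

lemma card_cylinders_add_le: "card (cylinders (a + b)) \<le> card (cylinders a) * card (cylinders b)"
proof -
  let ?join = "\<lambda>(A, B). A \<inter> (phi ^^ a) -` B"
  have "cylinders (a + b) \<subseteq> ?join ` (cylinders a \<times> cylinders b)"
  proof
    fix C
    assume "C \<in> cylinders (a + b)"
    then obtain w where w: "w \<in> words (a + b)" "C = cylinder (a + b) w" "interior C \<noteq> {}"
      by (auto simp: cylinders_def)
    let ?A = "cylinder a w" and ?B = "cylinder b (\<lambda>i. w (a + i))"
    have C: "C = ?A \<inter> (phi ^^ a) -` ?B"
      using w(2) cylinder_add by simp
    then have "interior ?A \<noteq> {}" "interior ((phi ^^ a) -` ?B) \<noteq> {}"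
      using w(3) interior_mono[of C] by blast+
    then have "?A \<in> cylinders a" "?B \<in> cylinders b"
      using w(1) unfolding interior_vimage_iterate by (auto simp: cylinders_def words_def)
    then show "C \<in> ?join ` (cylinders a \<times> cylinders b)"
      using C by force
  qed
  then have "card (cylinders (a + b)) \<le> card (?join ` (cylinders a \<times> cylinders b))"
    by (intro card_mono finite_imageI finite_cartesian_product finite_cylinders)
  also have "\<dots> \<le> card (cylinders a \<times> cylinders b)"
    by (intro card_image_le finite_cartesian_product finite_cylinders)
  finally show ?thesis
    by (simp add: card_cartesian_product)
qed

text \<open>Pull back by \<open>k\<close> steps and pick a cylinder of length \<open>n + 2k\<close>: two points in the
  same cylinder have \<open>e2\<close>-close orbits for \<open>n + 2k\<close> steps, hence \<open>e\<close>-close ones in the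
  middle window, which is where the original points spend their first \<open>n\<close> steps.\<close>
lemma separated_card_le_card_cylinders:
  assumes "0 < e"
  shows "\<exists>k. \<forall>n S. finite S \<and> separated_set phi n e S \<longrightarrow> card S \<le> card (cylinders (n + k))"
proof -
  obtain k where k: "\<And>x y m j. (\<And>i. i < m + 2 * k \<Longrightarrow> dist ((phi ^^ i) x) ((phi ^^ i) y) \<le> e2)
    \<Longrightarrow> j < m \<Longrightarrow> dist ((phi ^^ (j + k)) x) ((phi ^^ (j + k)) y) \<le> e"
    using close_orbit_window[OF assms] by blast
  have shift: "(phi ^^ (j + k)) ((inv phi ^^ k) s) = (phi ^^ j) s" for j s
    by (simp add: funpow_add)
  have "card S \<le> card (cylinders (n + 2 * k))" if S: "finite S" "separated_set phi n e S" for n S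
  proof (rule card_le_of_unique_witness[OF finite_cylinders, where R = "\<lambda>s C. (inv phi ^^ k) s \<in> C"])
    show "\<exists>C\<in>cylinders (n + 2 * k). (inv phi ^^ k) s \<in> C" if "s \<in> S" for s
      by (rule cylinders_cover)
    fix s s' C
    assume "s \<in> S" "s' \<in> S" and C: "C \<in> cylinders (n + 2 * k)" "(inv phi ^^ k) s \<in> C" "(inv phi ^^ k) s' \<in> C"
    then obtain w where "w \<in> words (n + 2 * k)" "C = cylinder (n + 2 * k) w"
      by (auto simp: cylinders_def)
    then have "dist ((phi ^^ i) ((inv phi ^^ k) s)) ((phi ^^ i) ((inv phi ^^ k) s')) \<le> e2"
      if "i < n + 2 * k" for i
      using C that by (intro dist_in_rectangle[of "w i"]) (auto simp: words_def cylinder_def)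
    then have "\<forall>j<n. dist ((phi ^^ j) s) ((phi ^^ j) s') \<le> e"
      using k[of n "(inv phi ^^ k) s" "(inv phi ^^ k) s'"] by (simp add: shift)
    then show "s = s'"
      using S(2) \<open>s \<in> S\<close> \<open>s' \<in> S\<close> unfolding separated_set_def by (meson not_le)
  qed
  then show ?thesis
    by blast
qed

lemma separated_sets_bounded:
  assumes "0 < e"
  shows "\<exists>B. \<forall>S. finite S \<and> separated_set phi n e S \<longrightarrow> card S \<le> B"
  using separated_card_le_card_cylinders[OF assms] by blast

lemma one_le_max_separated:
  assumes "0 < e"
  shows "1 \<le> max_separated phi n e"
proof -
  obtain B where "\<forall>S. finite S \<and> separated_set phi n e S \<longrightarrow> card S \<le> B"
    using separated_sets_bounded[OF assms] by blast
  then show ?thesis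
    by (rule max_separated_pos)
qed

lemma card_cylinders_le_max_separated:
  assumes "0 < m"
  shows "card (cylinders m) \<le> max_separated phi m (e2 / 3) * (card R1 * card R1)"
proof -
  obtain B where B: "\<forall>S. finite S \<and> separated_set phi m (e2 / 3) S \<longrightarrow> card S \<le> B"
    using separated_sets_bounded e2_pos by (meson zero_less_divide_iff zero_less_numeral)
  obtain S where S: "finite S" "separated_set phi m (e2 / 3) S" "card S = max_separated phi m (e2 / 3)"
    using max_separated_attained[OF B] by blast
  define R where "R C t \<longleftrightarrow> (\<exists>w x. w \<in> words m \<and> C = cylinder m w \<and> x \<in> interior C \<and>
    (\<forall>i<m. dist ((phi ^^ i) x) ((phi ^^ i) (fst t)) \<le> e2 / 3) \<and> snd t = (w 0, w (m - 1)))" for C t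
  have "card (cylinders m) \<le> card (S \<times> R1 \<times> R1)"
  proof (rule card_le_of_unique_witness[where R = R])
    show "finite (S \<times> R1 \<times> R1)"
      using S(1) finite_R1 by simp
    show "\<exists>t\<in>S \<times> R1 \<times> R1. R C t" if "C \<in> cylinders m" for C
    proof -
      obtain w x where "w \<in> words m" "C = cylinder m w" "x \<in> interior C"
        using \<open>C \<in> cylinders m\<close> by (auto simp: cylinders_def)
      moreover obtain y where "y \<in> S" "\<forall>i<m. dist ((phi ^^ i) x) ((phi ^^ i) y) \<le> e2 / 3"
        using max_separated_spanning[OF B _ S] e2_pos by auto
      moreover have "(y, w 0, w (m - 1)) \<in> S \<times> R1 \<times> R1"
        using calculation \<open>0 < m\<close> by (auto simp: words_def)
      ultimately show ?thesis
        unfolding R_def by (intro bexI[of _ "(y, w 0, w (m - 1))"] exI[of _ w] exI[of _ x]) auto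
    qed
    fix C C' t
    assume "R C t" "R C' t"
    then obtain w x w' x' where C: "w \<in> words m" "C = cylinder m w" "x \<in> interior C"
      and C': "w' \<in> words m" "C' = cylinder m w'" "x' \<in> interior C'"
      and ends: "w 0 = w' 0" "w (m - 1) = w' (m - 1)"
      and near: "\<And>i. i < m \<Longrightarrow> dist ((phi ^^ i) x) ((phi ^^ i) (fst t)) \<le> e2 / 3"
        "\<And>i. i < m \<Longrightarrow> dist ((phi ^^ i) x') ((phi ^^ i) (fst t)) \<le> e2 / 3"
      unfolding R_def by (metis prod.inject)
    have "cylinder m w = cylinder m w'"
      using C(3) C'(3) unfolding C(2) C'(2)
      by (rule cylinder_eq_of_common_shadow[OF C(1) C'(1) \<open>0 < m\<close> ends _ _ near])
    then show "C = C'"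
      using C(2) C'(2) by simp
  qed
  then show ?thesis
    using S(3) by (simp add: card_cartesian_product)
qed

lemma topological_entropy_le_cylinder_growth:
  "1 \<le> m \<Longrightarrow> topological_entropy phi \<le> ereal (ln (card (cylinders m)) / m)"
  using card_cylinders_add_le card_cylinders_pos separated_card_le_card_cylinders
  by (rule topological_entropy_le_growth_rate[where g = "\<lambda>m. card (cylinders m)"])

lemma topological_entropy_finite: "\<bar>topological_entropy phi\<bar> \<noteq> \<infinity>"
proof -
  have "0 \<le> topological_entropy phi"
    using one_le_max_separated by (intro topological_entropy_nonneg[of 1]) auto
  then show ?thesis
    using topological_entropy_le_cylinder_growth[of 1] by auto
qed

lemma ln_card_cylinders_le:
  assumes "0 < m"
  shows "ln (card (cylinders m)) \<le> ln (max_separated phi m (e2 / 3)) + 2 * ln (card R1)"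
proof -
  have "R1 \<noteq> {}"
    using R1_cover by blast
  then have pos: "0 < real (card R1)" "0 < real (max_separated phi m (e2 / 3))"
    "0 < real (card (cylinders m))"
    using finite_R1 one_le_max_separated[of "e2 / 3" m] card_cylinders_pos[of m] e2_pos
    by (simp_all add: card_gt_0_iff Suc_le_eq)
  have "card (cylinders m) \<le> max_separated phi m (e2 / 3) * (card R1 * card R1)"
    using card_cylinders_le_max_separated assms by simp
  then have "real (card (cylinders m)) \<le> real (max_separated phi m (e2 / 3) * (card R1 * card R1))"
    by (simp only: of_nat_le_iff)
  then have "ln (card (cylinders m)) \<le> ln (max_separated phi m (e2 / 3) * (card R1 * card R1))"
    using pos by simp
  also have "\<dots> = ln (max_separated phi m (e2 / 3)) + 2 * ln (card R1)"
    using pos by (simp add: ln_mult)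
  finally show ?thesis .
qed

lemma eventually_cylinder_growth_less:
  assumes "topological_entropy phi < ereal b"
  shows "\<forall>\<^sub>F m in sequentially. ln (card (cylinders m)) / m < b"
proof -
  define \<delta> where "\<delta> = e2 / 3"
  have "0 < \<delta>"
    using e2_pos by (simp add: \<delta>_def)
  obtain c where "topological_entropy phi < ereal c" "c < b"
    using ereal_dense2[OF assms] by auto
  moreover have "limsup (\<lambda>m. ereal (ln (max_separated phi m \<delta>) / m)) \<le> topological_entropy phi"
    by (rule limsup_le_topological_entropy[OF \<open>0 < \<delta>\<close>])
  ultimately have "limsup (\<lambda>m. ereal (ln (max_separated phi m \<delta>) / m)) < ereal c"
    by simp
  then have "\<forall>\<^sub>F m in sequentially. ereal (ln (max_separated phi m \<delta>) / m) < ereal c"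
    by (rule Limsup_lessD)
  then have "\<forall>\<^sub>F m in sequentially. ln (max_separated phi m \<delta>) / m < c"
    by simp
  moreover have "\<forall>\<^sub>F m in sequentially. 2 * ln (card R1) / m < b - c"
    using order_tendstoD(2)[OF lim_const_over_n[of "2 * ln (card R1)"]] \<open>c < b\<close> by simp
  moreover have "\<forall>\<^sub>F m in sequentially. 0 < m"
    by (rule eventually_gt_at_top)
  ultimately show ?thesis
  proof eventually_elim
    case (elim m)
    then have "ln (card (cylinders m)) / m \<le> (ln (max_separated phi m \<delta>) + 2 * ln (card R1)) / m"
      using ln_card_cylinders_le by (intro divide_right_mono) (simp_all add: \<delta>_def)
    then show ?case
      using elim(1,2) by (simp add: add_divide_distrib)
  qed
qed

lemma cylinder_growth_rate:
  "(\<lambda>m. ln (card (cylinders m)) / m) \<longlonglongrightarrow> real_of_ereal (topological_entropy phi)"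
proof -
  define H where "H = real_of_ereal (topological_entropy phi)"
  have H: "topological_entropy phi = ereal H"
    using topological_entropy_finite ereal_real' by (simp add: H_def)
  show ?thesis
    unfolding H_def[symmetric]
  proof (rule order_tendstoI)
    fix a
    assume "a < H"
    have "H \<le> ln (card (cylinders m)) / m" if "1 \<le> m" for m
      using topological_entropy_le_cylinder_growth[OF that] H by simp
    moreover have "\<forall>\<^sub>F m in sequentially. 1 \<le> m"
      by (rule eventually_ge_at_top)
    ultimately show "\<forall>\<^sub>F m in sequentially. a < ln (card (cylinders m)) / m"
      using \<open>a < H\<close> by (metis (mono_tags, lifting) eventually_mono less_le_trans)
  next
    fix b
    assume "H < b"
    then show "\<forall>\<^sub>F m in sequentially. ln (card (cylinders m)) / m < b"
      using H by (intro eventually_cylinder_growth_less) simp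
  qed
qed

lemma refined_intersection_eq:
  "(\<Inter>i\<in>{- int k..int k}. zpow phi (- i) ` g i) = (phi ^^ k) ` cylinder (2 * k + 1) (\<lambda>j. g (int j - int k))"
proof -
  have "x \<in> (\<Inter>i\<in>{- int k..int k}. zpow phi (- i) ` g i) \<longleftrightarrow>
      (\<forall>j<2 * k + 1. (phi ^^ j) ((inv phi ^^ k) x) \<in> g (int j - int k))" for x
  proof -
    have "zpow phi i x = (phi ^^ nat (i + int k)) ((inv phi ^^ k) x)" if "- int k \<le> i" for i
      using zpow_iterate[OF that, of "(inv phi ^^ k) x"] by simp
    then have "x \<in> (\<Inter>i\<in>{- int k..int k}. zpow phi (- i) ` g i) \<longleftrightarrow>
        (\<forall>i\<in>{- int k..int k}. (phi ^^ nat (i + int k)) ((inv phi ^^ k) x) \<in> g i)"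
      by (simp add: image_zpow_neg)
    then show ?thesis
      unfolding ball_symmetric_interval_iff by simp
  qed
  then show ?thesis
    by (auto simp: image_iterate_eq_vimage cylinder_def)
qed

lemma refined_partition_eq:
  "refined_partition phi R1 (Suc k) = (\<lambda>C. (phi ^^ k) ` C) ` cylinders (2 * k + 1)"
proof -
  have I: "{1 - int (Suc k)..int (Suc k) - 1} = {- int k..int k}"
    by auto
  show ?thesis
  proof (intro equalityI subsetI)
    fix R
    assume "R \<in> refined_partition phi R1 (Suc k)"
    then obtain f where f: "\<forall>i\<in>{- int k..int k}. f i \<in> R1"
      and R: "R = (phi ^^ k) ` cylinder (2 * k + 1) (\<lambda>j. f (int j - int k))" and "interior R \<noteq> {}"
      unfolding refined_partition_def I refined_intersection_eq by blast
    moreover have "(\<lambda>j. f (int j - int k)) \<in> words (2 * k + 1)"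
      using f by (auto simp: words_def)
    ultimately show "R \<in> (\<lambda>C. (phi ^^ k) ` C) ` cylinders (2 * k + 1)"
      unfolding cylinders_def by (auto simp: interior_image_iterate)
  next
    fix R
    assume "R \<in> (\<lambda>C. (phi ^^ k) ` C) ` cylinders (2 * k + 1)"
    then obtain w where w: "w \<in> words (2 * k + 1)" "interior (cylinder (2 * k + 1) w) \<noteq> {}"
      and R: "R = (phi ^^ k) ` cylinder (2 * k + 1) w"
      by (auto simp: cylinders_def)
    define f where "f i = w (nat (i + int k))" for i
    have "(\<lambda>j. f (int j - int k)) = w"
      by (simp add: f_def)
    moreover have "\<forall>i\<in>{- int k..int k}. f i \<in> R1"
      using w(1) by (auto simp: f_def words_def)
    ultimately show "R \<in> refined_partition phi R1 (Suc k)"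
      unfolding refined_partition_def I refined_intersection_eq
      using R w(2) by (auto simp: interior_image_iterate)
  qed
qed

lemma card_refined_partition:
  assumes "0 < n"
  shows "card (refined_partition phi R1 n) = card (cylinders (2 * n - 1))"
proof -
  obtain k where n: "n = Suc k"
    using assms gr0_implies_Suc by blast
  have "inj_on (\<lambda>C. (phi ^^ k) ` C) (cylinders (2 * k + 1))"
    using inj_fn[OF bij_is_inj[OF bij_phi]] by (simp add: inj_on_def inj_image_eq_iff)
  then show ?thesis
    unfolding n refined_partition_eq by (simp add: card_image)
qed

end

text \<open>The bounds hold with \<open>C = c = 1\<close>.\<close>
theorem lemma5p13:
  fixes phi :: "'a::metric_space \<Rightarrow> 'a" and br :: "'a \<Rightarrow> 'a \<Rightarrow> 'a"
    and eX lamX e1 e2 :: real and R1 :: "'a set set"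
  assumes "smale_space phi br eX lamX"
    and "irreducible_sys phi"
    and "eps1_ok br eX e1"
    and "eps2_ok phi br e1 e2"
    and "markov_partition phi br e1 R1"
    and "\<forall>R\<in>R1. diameter R \<le> e2"
  shows "\<exists>C c. C > 0 \<and> c > 0 \<and>
    (\<forall>\<epsilon>. 0 < \<epsilon> \<and> \<epsilon> < 1 \<longrightarrow> (\<exists>n0::nat. \<forall>n\<ge>n0.
       c * exp (2 * (real_of_ereal (topological_entropy phi) - \<epsilon>) * real n)
         < real (card (refined_partition phi R1 n)) \<and>
       real (card (refined_partition phi R1 n))
         < C * exp (2 * (real_of_ereal (topological_entropy phi) + \<epsilon>) * real n)))"
proof -
  interpret smale_markov phi br eX lamX e1 e2 R1
    using assms(1,3-6) by unfold_locales
  define H where "H = real_of_ereal (topological_entropy phi)"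
  have "\<forall>\<^sub>F n in sequentially.
      exp (2 * (H - \<epsilon>) * n) < card (refined_partition phi R1 n) \<and>
      card (refined_partition phi R1 n) < exp (2 * (H + \<epsilon>) * n)" if "0 < \<epsilon>" for \<epsilon>
  proof -
    have "\<forall>\<^sub>F n in sequentially. exp (2 * (H - \<epsilon>) * n) < card (cylinders (2 * n - 1)) \<and>
        card (cylinders (2 * n - 1)) < exp (2 * (H + \<epsilon>) * n)"
      using cylinder_growth_rate card_cylinders_pos \<open>0 < \<epsilon>\<close> unfolding H_def
      by (intro exp_bounds_at_odd_indices[where g = "\<lambda>m. card (cylinders m)"]) (auto simp: Suc_le_eq)
    moreover have "\<forall>\<^sub>F n in sequentially. 0 < n"
      by (rule eventually_gt_at_top)
    ultimately show ?thesis
      by eventually_elim (simp add: card_refined_partition)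
  qed
  then show ?thesis
    unfolding H_def eventually_sequentially by (intro exI[of _ 1]) auto
qed

end
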